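(* Let $k\geq 2$. For every unitary $d\times d$ matrix $U$ with entries in $\mathbb{Z}[1/2,\zeta_{2^k}]$, write $U=A+B\zeta_{2^k}$ where $A,B$ are (uniquely determined) $d\times d$ matrices with entries in $\mathbb{Z}[1/2,\zeta_{2^{k-1}}]$, and set $\phi_k(U)=A\otimes I_2+B\otimes\Lambda_k$. Then $\phi_k$ is a well-defined function from the set of unitary matrices over $\mathbb{Z}[1/2,\zeta_{2^k}]$ to the set of unitary matrices over $\mathbb{Z}[1/2,\zeta_{2^{k-1}}]$, $\phi_k(U)$ has dimension $2d$, and for every $\ket{u}\in\mathbb{C}^d$, $$\phi_k(U)(\ket{u}\otimes\ket{\lambda_k})=(U\ket{u})\otimes\ket{\lambda_k}.$$ That is, $(\phi_k,\ket{\lambda_k})$ is a 2-dimensional catalytic embedding of the unitaries over $\mathbb{Z}[1/2,\zeta_{2^k}]$ into the unitaries over $\mathbb{Z}[1/2,\zeta_{2^{k-1}}]$.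
   Context: $\zeta_n=e^{2\pi i/n}$; $\mathbb{Z}[1/2,\zeta_n]$ is the smallest subring of $\mathbb{C}$ containing $1/2$ and $\zeta_n$. $\Lambda_k=\begin{bmatrix}0&1\\ \zeta_{2^{k-1}}&0\end{bmatrix}$ and $\ket{\lambda_k}=\frac{1}{\sqrt2}\begin{bmatrix}1\\ \zeta_{2^k}\end{bmatrix}$. For collections of unitaries $\mathcal{U},\mathcal{V}$, an $\ell$-dimensional catalytic embedding of $\mathcal{U}$ into $\mathcal{V}$ is a pair $(\phi,\ket{\lambda})$ with $\phi:\mathcal{U}\to\mathcal{V}$ and $\ket{\lambda}\in\mathbb{C}^\ell$ a state, such that whenever $U\in\mathcal{U}$ has dimension $d$, $\phi(U)$ has dimension $d\ell$ and $\phi(U)(\ket{u}\otimes\ket{\lambda})=(U\ket{u})\otimes\ket{\lambda}$ for all $\ket{u}\in\mathbb{C}^d$. *)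

theory Defs
  imports Complex_Main "Jordan_Normal_Form.Matrix"
begin

definition zeta :: "nat \<Rightarrow> complex" where
  "zeta n = cis (2 * pi / real n)"

inductive_set Zhalf_zeta :: "nat \<Rightarrow> complex set" for n :: nat where
  one: "1 \<in> Zhalf_zeta n"
| half: "1/2 \<in> Zhalf_zeta n"
| zeta: "zeta n \<in> Zhalf_zeta n"
| add: "x \<in> Zhalf_zeta n \<Longrightarrow> y \<in> Zhalf_zeta n \<Longrightarrow> x + y \<in> Zhalf_zeta n"
| neg: "x \<in> Zhalf_zeta n \<Longrightarrow> - x \<in> Zhalf_zeta n"
| mult: "x \<in> Zhalf_zeta n \<Longrightarrow> y \<in> Zhalf_zeta n \<Longrightarrow> x * y \<in> Zhalf_zeta n"

definition adjoint :: "complex mat \<Rightarrow> complex mat" where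
  "adjoint U = mat (dim_col U) (dim_row U) (\<lambda>(i, j). cnj (U $$ (j, i)))"

definition unitary_mat :: "complex mat \<Rightarrow> bool" where
  "unitary_mat U \<longleftrightarrow> square_mat U \<and>
     U * adjoint U = 1\<^sub>m (dim_row U) \<and> adjoint U * U = 1\<^sub>m (dim_row U)"

definition unitaries_over :: "complex set \<Rightarrow> complex mat set" where
  "unitaries_over R = {U. unitary_mat U \<and>
     (\<forall>i < dim_row U. \<forall>j < dim_col U. U $$ (i, j) \<in> R)}"

definition entries_in :: "complex set \<Rightarrow> complex mat \<Rightarrow> bool" where
  "entries_in R A \<longleftrightarrow> (\<forall>i < dim_row A. \<forall>j < dim_col A. A $$ (i, j) \<in> R)"

definition kron_mat :: "complex mat \<Rightarrow> complex mat \<Rightarrow> complex mat" where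
  "kron_mat A B = mat (dim_row A * dim_row B) (dim_col A * dim_col B)
     (\<lambda>(i, j). A $$ (i div dim_row B, j div dim_col B) * B $$ (i mod dim_row B, j mod dim_col B))"

definition kron_vec :: "complex vec \<Rightarrow> complex vec \<Rightarrow> complex vec" where
  "kron_vec u v = vec (dim_vec u * dim_vec v)
     (\<lambda>i. u $ (i div dim_vec v) * v $ (i mod dim_vec v))"

definition Lambda :: "nat \<Rightarrow> complex mat" where
  "Lambda k = mat_of_rows_list 2 [[0, 1], [zeta (2 ^ (k - 1)), 0]]"

definition lambda_state :: "nat \<Rightarrow> complex vec" where
  "lambda_state k = vec_of_list [1 / complex_of_real (sqrt 2), zeta (2 ^ k) / complex_of_real (sqrt 2)]"

definition is_decomp :: "nat \<Rightarrow> complex mat \<Rightarrow> complex mat \<times> complex mat \<Rightarrow> bool" where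
  "is_decomp k U AB \<longleftrightarrow>
     fst AB \<in> carrier_mat (dim_row U) (dim_col U) \<and>
     snd AB \<in> carrier_mat (dim_row U) (dim_col U) \<and>
     entries_in (Zhalf_zeta (2 ^ (k - 1))) (fst AB) \<and>
     entries_in (Zhalf_zeta (2 ^ (k - 1))) (snd AB) \<and>
     U = fst AB + zeta (2 ^ k) \<cdot>\<^sub>m snd AB"

definition phi :: "nat \<Rightarrow> complex mat \<Rightarrow> complex mat" where
  "phi k U = (let AB = (THE AB. is_decomp k U AB) in
     kron_mat (fst AB) (1\<^sub>m 2) + kron_mat (snd AB) (Lambda k))"

definition catalytic_embedding ::
  "complex mat set \<Rightarrow> complex mat set \<Rightarrow> nat \<Rightarrow> (complex mat \<Rightarrow> complex mat) \<Rightarrow> complex vec \<Rightarrow> bool" where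
  "catalytic_embedding \<U> \<V> l f lam \<longleftrightarrow>
     lam \<in> carrier_vec l \<and> (\<Sum>i<l. (cmod (lam $ i))\<^sup>2) = 1 \<and>
     (\<forall>U \<in> \<U>. f U \<in> \<V> \<and>
        (\<forall>d. U \<in> carrier_mat d d \<longrightarrow>
           f U \<in> carrier_mat (d * l) (d * l) \<and>
           (\<forall>u \<in> carrier_vec d. f U *\<^sub>v kron_vec u lam = kron_vec (U *\<^sub>v u) lam)))"

end

theory Submission
  imports Defs "HOL-Computational_Algebra.Polynomial_Factorial" "Jordan_Normal_Form.Determinant"
begin

text \<open>Write \<open>z = zeta (2 ^ k)\<close> and \<open>w = z\<^sup>2 = zeta (2 ^ (k - 1))\<close>. Every element of
  \<open>\<int>[1/2, z]\<close> is \<open>a + z b\<close> with \<open>a, b \<in> \<int>[1/2, w]\<close>, and this splitting is unique: \<open>z\<close> has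
  degree \<open>2 ^ (k - 1)\<close> over \<open>\<rat>\<close>, since \<open>z - 1\<close> is a root of the Eisenstein polynomial
  \<open>(x + 1) ^ 2 ^ (k - 1) + 1\<close>, whereas \<open>w\<close> is a root of \<open>x ^ 2 ^ (k - 2) + 1\<close>. Uniqueness makes
  \<open>phi k\<close> well defined, and it splits \<open>U U\<^sup>\<dagger> = 1\<close> for \<open>U = A + z B\<close> into
  \<open>A A\<^sup>\<dagger> + B B\<^sup>\<dagger> = 1\<close> and \<open>cnj w A B\<^sup>\<dagger> + B A\<^sup>\<dagger> = 0\<close>. As \<open>\<Lambda> \<Lambda>\<^sup>\<dagger> = 1\<close> and
  \<open>\<Lambda>\<^sup>\<dagger> = cnj w \<Lambda>\<close>, these are exactly the conditions for \<open>A \<otimes> I + B \<otimes> \<Lambda>\<close> to be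
  unitary. Finally \<open>lambda_state k\<close> is an eigenvector of \<open>\<Lambda>\<close> with eigenvalue \<open>z\<close>, so
  \<open>B \<otimes> \<Lambda>\<close> acts as \<open>z B \<otimes> I\<close> on vectors \<open>u \<otimes> lambda_state k\<close>.\<close>

section \<open>Integer polynomials\<close>

definition ipoly :: "int poly \<Rightarrow> 'a :: comm_ring_1 \<Rightarrow> 'a" where
  "ipoly p x = poly (map_poly of_int p) x"

lemma ipoly_pCons: "ipoly (pCons a p) x = of_int a + x * ipoly p x"
  by (simp add: ipoly_def map_poly_pCons)

lemma ipoly_0 [simp]: "ipoly 0 x = 0"
  by (simp add: ipoly_def)

lemma ipoly_const [simp]: "ipoly [:a:] x = of_int a"
  by (simp add: ipoly_pCons)

lemma ipoly_1 [simp]: "ipoly 1 x = 1"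
  by (simp add: ipoly_def)

lemma ipoly_add [simp]: "ipoly (p + q) x = ipoly p x + ipoly q x"
proof -
  have "map_poly of_int (p + q) = map_poly of_int p + (map_poly of_int q :: 'a poly)"
    by (intro poly_eqI) (simp add: coeff_map_poly)
  then show ?thesis by (simp add: ipoly_def)
qed

lemma ipoly_smult [simp]: "ipoly (smult a p) x = of_int a * ipoly p x"
  by (simp add: ipoly_def map_poly_smult)

lemma ipoly_uminus [simp]: "ipoly (- p) x = - ipoly p x"
  using ipoly_smult[of "-1" p x] by simp

lemma ipoly_mult [simp]: "ipoly (p * q) x = ipoly p x * ipoly q x"
  by (induction p) (simp_all add: ipoly_pCons algebra_simps)

lemma ipoly_power [simp]: "ipoly (p ^ n) x = ipoly p x ^ n"
  by (induction n) simp_all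

lemma ipoly_pcompose [simp]: "ipoly (p \<circ>\<^sub>p q) x = ipoly p (ipoly q x)"
  by (induction p) (simp_all add: pcompose_pCons ipoly_pCons)

lemma ipoly_monom: "ipoly (monom a n) x = of_int a * x ^ n"
  by (simp add: ipoly_def map_poly_monom poly_monom)

lemma prime_dvd_coeffs_of_factor:
  fixes p :: int and g q r :: "int poly"
  assumes "prime p" and g: "g = q * r" and "degree r \<ge> 1" and r0: "\<not> p dvd coeff r 0"
    and dvd_g: "\<And>i. i < degree g \<Longrightarrow> p dvd coeff g i"
  shows "p dvd coeff q i"
proof (induction i rule: less_induct)
  case (less i)
  show ?case
  proof (cases "q \<noteq> 0 \<and> i \<le> degree q")
    case True
    have "r \<noteq> 0"
      using \<open>degree r \<ge> 1\<close> by auto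
    with True have "i < degree g"
      using \<open>degree r \<ge> 1\<close> by (auto simp: g degree_mult_eq)
    have "coeff g i = (\<Sum>s<i. coeff q s * coeff r (i - s)) + coeff q i * coeff r 0"
      by (simp add: g coeff_mult lessThan_Suc_atMost[symmetric])
    moreover have "p dvd (\<Sum>s<i. coeff q s * coeff r (i - s))"
      using less by (intro dvd_sum) auto
    ultimately have "p dvd coeff q i * coeff r 0"
      using dvd_g[OF \<open>i < degree g\<close>] by (metis dvd_add_right_iff)
    with \<open>prime p\<close> r0 show ?thesis
      by (simp add: prime_dvd_mult_iff)
  qed (auto simp: coeff_eq_0)
qed

lemma eisenstein_irreducible:
  fixes p :: int and g :: "int poly"
  assumes p: "prime p" and monic: "lead_coeff g = 1" and "degree g \<ge> 1"
    and dvd_g: "\<And>i. i < degree g \<Longrightarrow> p dvd coeff g i" and sq: "\<not> p\<^sup>2 dvd coeff g 0"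
  shows "irreducible g"
proof (rule irreducibleI)
  show "g \<noteq> 0" and "\<not> is_unit g"
    using \<open>degree g \<ge> 1\<close> by (auto simp: is_unit_poly_iff)
  fix q r assume g: "g = q * r"
  have unit_if_const: "is_unit a" if "degree a = 0" "lead_coeff a * lead_coeff b = 1" for a b :: "int poly"
    using that by (metis dvd_triv_left is_unit_const_poly_iff degree_eq_zeroE lead_coeff_pCons(2) pCons_0_0)
  have lc: "lead_coeff q * lead_coeff r = 1"
    using monic by (simp add: g lead_coeff_mult)
  show "is_unit q \<or> is_unit r"
  proof (cases "degree q = 0 \<or> degree r = 0")
    case True
    then show ?thesis
      using unit_if_const[OF _ lc] unit_if_const[of r q] lc by (auto simp: mult.commute)
  next
    case False
    have "p dvd coeff q 0 * coeff r 0"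
      using dvd_g[of 0] \<open>degree g \<ge> 1\<close> by (simp add: g coeff_mult_0)
    moreover have "\<not> (p dvd coeff q 0 \<and> p dvd coeff r 0)"
      using sq by (auto simp: g coeff_mult_0 power2_eq_square intro: mult_dvd_mono)
    ultimately consider "p dvd coeff q 0" "\<not> p dvd coeff r 0" | "p dvd coeff r 0" "\<not> p dvd coeff q 0"
      using p prime_dvd_mult_iff by blast
    then have "p dvd lead_coeff q \<or> p dvd lead_coeff r"
    proof cases
      case 1
      then show ?thesis
        using prime_dvd_coeffs_of_factor[OF p g _ _ dvd_g] False by simp
    next
      case 2
      then show ?thesis
        using prime_dvd_coeffs_of_factor[OF p _ _ _ dvd_g, of r q] False g by (simp add: mult.commute)
    qed
    then have "p dvd 1"
      using lc by (metis dvd_mult dvd_mult2)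
    with p show ?thesis
      by (simp add: not_prime_unit)
  qed
qed

lemma even_choose_two_power:
  assumes "0 < i" "i < 2 ^ m"
  shows "even (2 ^ m choose i)"
proof (rule ccontr)
  assume odd: "odd (2 ^ m choose i)"
  obtain j where i: "i = Suc j" using assms(1) by (cases i) auto
  obtain n where n: "2 ^ m = Suc n" by (metis Suc_pred pos2 zero_less_power)
  have "i * (2 ^ m choose i) = 2 ^ m * (n choose j)"
    using Suc_times_binomial_eq[of n j] by (simp add: i n mult.commute)
  then have "2 ^ m dvd i * (2 ^ m choose i)"
    by simp
  moreover have "coprime (2 ^ m) (2 ^ m choose i)"
    using odd by simp
  ultimately have "2 ^ m dvd i"
    by (simp add: coprime_dvd_mult_left_iff)
  with assms show False
    by (simp add: nat_dvd_not_less)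
qed

lemma irreducible_shifted_cyclotomic_two_power:
  "irreducible ([:1, 1:] ^ 2 ^ m + (1 :: int poly))" (is "irreducible ?g")
proof (rule eisenstein_irreducible[of 2])
  have deg: "degree ?g = 2 ^ m"
    by (subst degree_add_eq_left) (simp_all add: degree_linear_power)
  show "lead_coeff ?g = 1" "degree ?g \<ge> 1" "\<not> 2\<^sup>2 dvd coeff ?g 0"
    by (simp_all add: deg coeff_linear_poly_power)
  show "2 dvd coeff ?g i" if "i < degree ?g" for i
    using that even_choose_two_power[of i m]
    by (cases "i = 0") (simp_all add: deg coeff_linear_poly_power)
qed simp

lemma irreducible_common_root_degree_le:
  fixes g p :: "int poly" and x :: "'a :: {comm_ring_1, ring_char_0}"
  assumes g: "irreducible g" "ipoly g x = 0" and p: "p \<noteq> 0" "ipoly p x = 0"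
  shows "degree g \<le> degree p"
proof -
  let ?vanishes = "\<lambda>q. q \<noteq> 0 \<and> ipoly q x = 0"
  obtain p0 where p0: "?vanishes p0" "degree p0 \<le> degree p"
    and least: "\<And>q. ?vanishes q \<Longrightarrow> degree p0 \<le> degree q"
    using ex_has_least_nat[of ?vanishes p degree] p by (metis (no_types, lifting))
  obtain q r where qr: "pseudo_divmod g p0 = (q, r)"
    by (cases "pseudo_divmod g p0")
  define c where "c = lead_coeff p0 ^ (Suc (degree g) - degree p0)"
  have eq: "smult c g = p0 * q + r" and r: "r = 0 \<or> degree r < degree p0"
    using pseudo_divmod[OF _ qr] p0 by (auto simp: c_def)
  have "ipoly r x = 0"
    using arg_cong[OF eq, of "\<lambda>s. ipoly s x"] g(2) p0 by simp
  with r least[of r] have "r = 0"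
    by (cases "r = 0") auto
  with eq have cg: "[:c:] * g = p0 * q"
    by simp
  then have "g dvd p0 * q"
    by (metis dvd_triv_right)
  then have "g dvd p0 \<or> g dvd q"
    using irreducible_imp_prime_poly[OF g(1)] prime_elem_dvd_mult_iff by blast
  then show ?thesis
  proof
    assume "g dvd p0"
    then show ?thesis
      using p0 dvd_imp_degree_le[of g p0] by simp
  next
    assume "g dvd q"
    then obtain q' where "q = g * q'" ..
    with cg have "[:c:] * g = (p0 * q') * g"
      by (simp add: algebra_simps)
    moreover have "g \<noteq> 0" "c \<noteq> 0"
      using g(1) p0 by (auto simp: c_def)
    ultimately have cq: "[:c:] = p0 * q'"
      by (metis mult_cancel_right)
    with \<open>c \<noteq> 0\<close> have "q' \<noteq> 0"
      by auto
    then have "degree p0 = 0"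
      using p0 degree_mult_eq[of p0 q'] by (simp flip: cq)
    then obtain a where "p0 = [:a:]"
      by (rule degree_eq_zeroE)
    with p0 show ?thesis
      by simp
  qed
qed

lemma ipoly_reduce_negacyclic:
  fixes P :: "int poly" and w :: "'a :: comm_ring_1"
  assumes "N \<ge> 1" and "w ^ N = -1"
  shows "\<exists>R. degree R < N \<and> ipoly R w = ipoly P w"
proof -
  define f :: "int poly" where "f = monom 1 N + 1"
  have deg: "degree f = N" and lc: "lead_coeff f = 1"
    using assms(1) by (simp_all add: f_def degree_add_eq_left degree_monom_eq)
  then have "f \<noteq> 0"
    by auto
  obtain q r where qr: "pseudo_divmod P f = (q, r)"
    by (cases "pseudo_divmod P f")
  have "P = f * q + r" "r = 0 \<or> degree r < N"
    using pseudo_divmod[OF \<open>f \<noteq> 0\<close> qr] deg lc by simp_all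
  moreover have "ipoly f w = 0"
    using assms(2) by (simp add: f_def ipoly_monom)
  ultimately show ?thesis
    using assms(1) by (intro exI[of _ r]) auto
qed

lemma degree_even_odd_parts_less:
  fixes R S :: "'a :: idom poly"
  assumes "degree R < N" and "degree S < N"
  shows "degree (R \<circ>\<^sub>p [:0, 0, 1:] + [:0, 1:] * (S \<circ>\<^sub>p [:0, 0, 1:])) < 2 * N"
proof (rule degree_add_less)
  show "degree (R \<circ>\<^sub>p [:0, 0, 1:]) < 2 * N"
    using assms(1) by (simp add: degree_pcompose)
  have "degree ([:0, 1:] * (S \<circ>\<^sub>p [:0, 0, 1:])) \<le> 1 + degree S * 2"
    using degree_mult_le[of "[:0, 1:]" "S \<circ>\<^sub>p [:0, 0, 1:]"] by (simp add: degree_pcompose)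
  then show "degree ([:0, 1:] * (S \<circ>\<^sub>p [:0, 0, 1:])) < 2 * N"
    using assms(2) by linarith
qed

section \<open>Roots of unity of order \<open>2\<^sup>k\<close>\<close>

lemma zeta_mult_cnj: "zeta n * cnj (zeta n) = 1"
  by (simp add: zeta_def cis_cnj cis_mult)

lemma zeta_nonzero: "zeta n \<noteq> 0"
  using zeta_mult_cnj[of n] by auto

lemma zeta_power_self: "zeta n ^ n = 1"
  by (cases "n = 0") (simp_all add: zeta_def DeMoivre)

lemma cnj_zeta: "cnj (zeta n) = zeta n ^ (n - 1)"
proof (cases n)
  case (Suc m)
  have "zeta n ^ (n - 1) * zeta n = 1"
    using zeta_power_self[of n] by (simp add: Suc power_Suc2[symmetric])
  then show ?thesis
    using zeta_mult_cnj[of n] zeta_nonzero[of n] by (metis mult.commute mult_left_cancel)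
qed (simp add: zeta_def)

lemma zeta_double_square: "zeta (2 * n) ^ 2 = zeta n"
  by (simp add: zeta_def DeMoivre)

lemma zeta_double_power_half: "n \<ge> 1 \<Longrightarrow> zeta (2 * n) ^ n = -1"
  by (simp add: zeta_def DeMoivre)

lemma zeta_two_power_square: "zeta (2 ^ k) ^ 2 = zeta (2 ^ (k - 1))"
proof (cases k)
  case 0
  then show ?thesis
    by (simp add: zeta_def)
next
  case (Suc j)
  then show ?thesis
    using zeta_double_square[of "2 ^ j"] by simp
qed

lemma ipoly_zeta_two_power_eq_0:
  fixes p :: "int poly"
  assumes "ipoly p (zeta (2 * 2 ^ m)) = 0" and "degree p < 2 ^ m"
  shows "p = 0"
proof (rule ccontr)
  assume "p \<noteq> 0"
  define g :: "int poly" where "g = [:1, 1:] ^ 2 ^ m + 1"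
  define z where "z = zeta (2 * 2 ^ m)"
  have shift: "ipoly [:1, 1:] (z - 1) = z"
    by (simp add: ipoly_pCons)
  have "ipoly g (z - 1) = z ^ 2 ^ m + 1"
    by (simp add: g_def shift)
  also have "\<dots> = 0"
    using zeta_double_power_half[of "2 ^ m"] by (simp add: z_def)
  finally have "ipoly g (z - 1) = 0" .
  moreover have "p \<circ>\<^sub>p [:1, 1:] \<noteq> 0" "ipoly (p \<circ>\<^sub>p [:1, 1:]) (z - 1) = 0"
    using \<open>p \<noteq> 0\<close> assms(1) by (auto simp: pcompose_eq_0 shift z_def[symmetric])
  ultimately have "degree g \<le> degree (p \<circ>\<^sub>p [:1, 1:])"
    using irreducible_common_root_degree_le irreducible_shifted_cyclotomic_two_power
    unfolding g_def by blast
  moreover have "degree g = 2 ^ m"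
    unfolding g_def by (subst degree_add_eq_left) (simp_all add: degree_linear_power)
  ultimately show False
    using assms(2) by (simp add: degree_pcompose)
qed

section \<open>The rings \<open>\<int>[1/2, \<zeta>\<^sub>n]\<close>\<close>

lemma Zhalf_zeta_zero: "0 \<in> Zhalf_zeta n"
  using Zhalf_zeta.add[OF Zhalf_zeta.one Zhalf_zeta.neg[OF Zhalf_zeta.one]] by simp

lemma Zhalf_zeta_diff: "x \<in> Zhalf_zeta n \<Longrightarrow> y \<in> Zhalf_zeta n \<Longrightarrow> x - y \<in> Zhalf_zeta n"
  unfolding diff_conv_add_uminus by (intro Zhalf_zeta.add Zhalf_zeta.neg)

lemma Zhalf_zeta_power: "x \<in> Zhalf_zeta n \<Longrightarrow> x ^ m \<in> Zhalf_zeta n"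
  by (induction m) (simp_all add: Zhalf_zeta.one Zhalf_zeta.mult)

lemma Zhalf_zeta_sum: "(\<And>i. i \<in> S \<Longrightarrow> f i \<in> Zhalf_zeta n) \<Longrightarrow> sum f S \<in> Zhalf_zeta n"
  by (induction S rule: infinite_finite_induct) (simp_all add: Zhalf_zeta_zero Zhalf_zeta.add)

lemma Zhalf_zeta_cnj: "x \<in> Zhalf_zeta n \<Longrightarrow> cnj x \<in> Zhalf_zeta n"
proof (induction x rule: Zhalf_zeta.induct)
  case zeta
  then show ?case
    by (simp add: cnj_zeta Zhalf_zeta_power Zhalf_zeta.zeta)
qed (simp_all add: Zhalf_zeta.one Zhalf_zeta.half Zhalf_zeta.add Zhalf_zeta.neg Zhalf_zeta.mult)

lemma Zhalf_zeta_double_split: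
  assumes "x \<in> Zhalf_zeta (2 * n)"
  shows "\<exists>a \<in> Zhalf_zeta n. \<exists>b \<in> Zhalf_zeta n. x = a + zeta (2 * n) * b"
  using assms
proof (induction x rule: Zhalf_zeta.induct)
  case (add x y)
  then obtain a b c d where "a \<in> Zhalf_zeta n" "b \<in> Zhalf_zeta n" "c \<in> Zhalf_zeta n" "d \<in> Zhalf_zeta n"
    and "x = a + zeta (2 * n) * b" "y = c + zeta (2 * n) * d"
    by blast
  then show ?case
    by (intro bexI[of _ "a + c"] bexI[of _ "b + d"]) (simp_all add: Zhalf_zeta.add algebra_simps)
next
  case (neg x)
  then obtain a b where "a \<in> Zhalf_zeta n" "b \<in> Zhalf_zeta n" "x = a + zeta (2 * n) * b"
    by blast
  then show ?case
    by (intro bexI[of _ "- a"] bexI[of _ "- b"]) (simp_all add: Zhalf_zeta.neg)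
next
  case (mult x y)
  then obtain a b c d where ab: "a \<in> Zhalf_zeta n" "b \<in> Zhalf_zeta n" "x = a + zeta (2 * n) * b"
    and cd: "c \<in> Zhalf_zeta n" "d \<in> Zhalf_zeta n" "y = c + zeta (2 * n) * d"
    by blast
  have "x * y = (a * c + zeta (2 * n) ^ 2 * (b * d)) + zeta (2 * n) * (a * d + b * c)"
    by (simp add: ab(3) cd(3) power2_eq_square algebra_simps)
  then show ?case
    using ab cd unfolding zeta_double_square
    by (intro bexI[of _ "a * c + zeta n * (b * d)"] bexI[of _ "a * d + b * c"])
       (simp_all add: Zhalf_zeta.add Zhalf_zeta.mult Zhalf_zeta.zeta)
qed (use Zhalf_zeta.one Zhalf_zeta.half Zhalf_zeta_zero in force)+

lemma Zhalf_zeta_ipoly_repr: "x \<in> Zhalf_zeta n \<Longrightarrow> \<exists>P e. x = ipoly P (zeta n) / 2 ^ e"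
proof (induction x rule: Zhalf_zeta.induct)
  case one
  show ?case by (intro exI[of _ 1] exI[of _ 0]) simp
next
  case half
  show ?case by (intro exI[of _ 1] exI[of _ 1]) simp
next
  case zeta
  show ?case by (intro exI[of _ "[:0, 1:]"] exI[of _ 0]) (simp add: ipoly_pCons)
next
  case (add x y)
  then obtain P e Q f where "x = ipoly P (zeta n) / 2 ^ e" "y = ipoly Q (zeta n) / 2 ^ f"
    by blast
  then have "x + y = ipoly (smult (2 ^ f) P + smult (2 ^ e) Q) (zeta n) / 2 ^ (e + f)"
    by (simp add: power_add add_frac_eq)
  then show ?case by blast
next
  case (neg x)
  then obtain P e where "x = ipoly P (zeta n) / 2 ^ e"
    by blast
  then show ?case
    by (intro exI[of _ "- P"] exI[of _ e]) simp
next
  case (mult x y)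
  then obtain P e Q f where "x = ipoly P (zeta n) / 2 ^ e" "y = ipoly Q (zeta n) / 2 ^ f"
    by blast
  then have "x * y = ipoly (P * Q) (zeta n) / 2 ^ (e + f)"
    by (simp add: power_add)
  then show ?case by blast
qed

lemma Zhalf_zeta_double_repr:
  assumes "x \<in> Zhalf_zeta (2 * N)" and "N \<ge> 1"
  obtains P e where "degree P < N" and "x = ipoly P (zeta (2 * N)) / 2 ^ e"
proof -
  obtain P e where "x = ipoly P (zeta (2 * N)) / 2 ^ e"
    using Zhalf_zeta_ipoly_repr[OF assms(1)] by blast
  moreover obtain R where "degree R < N" "ipoly R (zeta (2 * N)) = ipoly P (zeta (2 * N))"
    using ipoly_reduce_negacyclic[OF assms(2) zeta_double_power_half[OF assms(2)]] by blast
  ultimately show thesis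
    using that[of R e] by simp
qed

lemma Zhalf_zeta_independent:
  assumes a: "a \<in> Zhalf_zeta (2 ^ Suc m)" and b: "b \<in> Zhalf_zeta (2 ^ Suc m)"
    and ab: "a + zeta (2 ^ Suc (Suc m)) * b = 0"
  shows "a = 0 \<and> b = 0"
proof -
  \<comment> \<open>Clear denominators: \<open>c a = R(w)\<close> and \<open>c b = S(w)\<close> with \<open>degree R, degree S < 2 ^ m\<close>.
    Then \<open>T(x) = R(x\<^sup>2) + x S(x\<^sup>2)\<close> vanishes at \<open>z\<close> and has degree \<open>< 2 ^ (m + 1)\<close>, so \<open>T = 0\<close>;
    evaluating \<open>T\<close> also at \<open>-z\<close> gives \<open>R(w) = 0\<close>.\<close>
  define N :: nat where "N = 2 ^ m"
  define w where "w = zeta (2 * N)"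
  define z where "z = zeta (2 * (2 * N))"
  have "N \<ge> 1"
    by (simp add: N_def)
  have z2: "z ^ 2 = w"
    unfolding z_def w_def by (rule zeta_double_square)
  obtain P e where P: "degree P < N" "a = ipoly P w / 2 ^ e"
    using Zhalf_zeta_double_repr[OF _ \<open>N \<ge> 1\<close>] a by (auto simp: N_def w_def)
  obtain Q f where Q: "degree Q < N" "b = ipoly Q w / 2 ^ f"
    using Zhalf_zeta_double_repr[OF _ \<open>N \<ge> 1\<close>] b by (auto simp: N_def w_def)
  define c :: complex where "c = 2 ^ (e + f)"
  define R S where "R = smult (2 ^ f) P" and "S = smult (2 ^ e) Q"
  have R: "ipoly R w = c * a" and S: "ipoly S w = c * b"
    by (simp_all add: R_def S_def c_def P Q power_add)
  have "degree R < N" "degree S < N"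
    using P(1) Q(1) by (simp_all add: R_def S_def)
  define T where "T = R \<circ>\<^sub>p [:0, 0, 1:] + [:0, 1:] * (S \<circ>\<^sub>p [:0, 0, 1:])"
  have ipoly_T: "ipoly T y = ipoly R (y ^ 2) + y * ipoly S (y ^ 2)" for y
    by (simp add: T_def ipoly_pCons power2_eq_square)
  have "degree T < 2 * N"
    unfolding T_def using \<open>degree R < N\<close> \<open>degree S < N\<close> by (rule degree_even_odd_parts_less)
  moreover have "ipoly T z = 0"
  proof -
    have "ipoly T z = c * (a + z * b)"
      by (simp add: ipoly_T z2 R S algebra_simps)
    also have "a + z * b = 0"
      using ab by (simp add: z_def N_def)
    finally show ?thesis
      by simp
  qed
  ultimately have "T = 0"
    using ipoly_zeta_two_power_eq_0[of T "Suc m"] by (simp add: z_def N_def)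
  then have "ipoly T (- z) = 0"
    by simp
  with \<open>ipoly T z = 0\<close> have "ipoly R w = 0"
    by (simp add: ipoly_T z2)
  moreover have "c \<noteq> 0"
    by (simp add: c_def)
  ultimately have "a = 0"
    by (simp add: R)
  with ab show ?thesis
    by (simp add: zeta_nonzero)
qed

section \<open>Adjoints and Kronecker products\<close>

lemma sum_lessThan_mult_nat:
  fixes g :: "nat \<Rightarrow> 'a :: comm_monoid_add"
  shows "(\<Sum>q<m * n. g q) = (\<Sum>i<m. \<Sum>j<n. g (i * n + j))"
proof -
  have "(\<Sum>q<m * n. g q) = (\<Sum>i<m. \<Sum>q = i * n..<i * n + n. g q)"
    by (rule sum.nat_group[symmetric])
  also have "\<dots> = (\<Sum>i<m. \<Sum>j<n. g (i * n + j))"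
    by (rule sum.cong[OF refl]) (simp add: sum.atLeastLessThan_shift_0 atLeast0LessThan)
  finally show ?thesis .
qed

lemma mult_add_less_nat: "i < m \<Longrightarrow> a < p \<Longrightarrow> i * p + a < m * (p :: nat)"
proof -
  assume "i < m" "a < p"
  then have "i * p + a < (i + 1) * p" by simp
  also have "\<dots> \<le> m * p" using \<open>i < m\<close> by (intro mult_le_mono1) simp
  finally show ?thesis .
qed

lemma mult_add_div_nat: "a < p \<Longrightarrow> (i * p + a) div p = (i :: nat)"
  by (simp add: add.commute[of "i * p"])

lemma mult_add_mod_nat: "a < p \<Longrightarrow> (i * p + a) mod p = (a :: nat)"
  by (simp add: add.commute[of "i * p"])

lemma index_mult_mat_sum:
  assumes "A \<in> carrier_mat m n" "B \<in> carrier_mat n r" "i < m" "j < r"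
  shows "(A * B) $$ (i, j) = (\<Sum>l<n. A $$ (i, l) * B $$ (l, j))"
  using assms by (simp add: scalar_prod_def atLeast0LessThan)

lemma index_mult_mat_vec_sum:
  assumes "A \<in> carrier_mat m n" "u \<in> carrier_vec n" "i < m"
  shows "(A *\<^sub>v u) $ i = (\<Sum>l<n. A $$ (i, l) * u $ l)"
  using assms by (simp add: scalar_prod_def atLeast0LessThan)

lemma smult_mat_mult_vec:
  assumes "A \<in> carrier_mat m n" "u \<in> carrier_vec n"
  shows "(c \<cdot>\<^sub>m A) *\<^sub>v u = c \<cdot>\<^sub>v (A *\<^sub>v u)"
proof (rule eq_vecI)
  fix i assume "i < dim_vec (c \<cdot>\<^sub>v (A *\<^sub>v u))"
  then have "i < m"
    using assms(1) by simp
  then show "((c \<cdot>\<^sub>m A) *\<^sub>v u) $ i = (c \<cdot>\<^sub>v (A *\<^sub>v u)) $ i"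
    using assms by (simp add: index_mult_mat_vec_sum[of _ m n] sum_distrib_left mult.assoc
      del: index_mult_mat_vec)
qed (use assms in simp)

lemma add_mat_rearrange:
  fixes A B C D :: "'a :: comm_monoid_add mat"
  assumes "A \<in> carrier_mat m n" "B \<in> carrier_mat m n" "C \<in> carrier_mat m n" "D \<in> carrier_mat m n"
  shows "A + B + (C + D) = (A + D) + (B + C)"
  using carrier_matD[OF assms(1)] carrier_matD[OF assms(2)] carrier_matD[OF assms(3)] carrier_matD[OF assms(4)]
  by (intro eq_matI) (simp_all add: ac_simps)

lemma adjoint_carrier_mat: "A \<in> carrier_mat m n \<Longrightarrow> adjoint A \<in> carrier_mat n m"
  by (simp add: adjoint_def)

lemma dim_adjoint [simp]: "dim_row (adjoint A) = dim_col A" "dim_col (adjoint A) = dim_row A"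
  by (simp_all add: adjoint_def)

lemma index_adjoint [simp]:
  "i < dim_col A \<Longrightarrow> j < dim_row A \<Longrightarrow> adjoint A $$ (i, j) = cnj (A $$ (j, i))"
  by (simp add: adjoint_def)

lemma index_mult_adjoint:
  assumes "A \<in> carrier_mat r n" "B \<in> carrier_mat s n" "i < r" "j < s"
  shows "(A * adjoint B) $$ (i, j) = (\<Sum>l<n. A $$ (i, l) * cnj (B $$ (j, l)))"
  using assms by (simp add: scalar_prod_def atLeast0LessThan)

lemma adjoint_add:
  "A \<in> carrier_mat m n \<Longrightarrow> B \<in> carrier_mat m n \<Longrightarrow> adjoint (A + B) = adjoint A + adjoint B"
  by (intro eq_matI) auto

lemma adjoint_one: "adjoint (1\<^sub>m n) = 1\<^sub>m n"
  by (intro eq_matI) auto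

lemma kron_mat_carrier_mat:
  "A \<in> carrier_mat m n \<Longrightarrow> B \<in> carrier_mat p q \<Longrightarrow> kron_mat A B \<in> carrier_mat (m * p) (n * q)"
  by (simp add: kron_mat_def)

lemma dim_kron_mat [simp]:
  "dim_row (kron_mat A B) = dim_row A * dim_row B" "dim_col (kron_mat A B) = dim_col A * dim_col B"
  by (simp_all add: kron_mat_def)

lemma index_kron_mat:
  assumes "A \<in> carrier_mat m n" "B \<in> carrier_mat p q" "i < m" "j < n" "a < p" "b < q"
  shows "kron_mat A B $$ (i * p + a, j * q + b) = A $$ (i, j) * B $$ (a, b)"
  using assms mult_add_less_nat[of i m a p] mult_add_less_nat[of j n b q] by (simp add: kron_mat_def)

lemma kron_mat_eqI:
  assumes "M \<in> carrier_mat (m * p) (n * q)" "N \<in> carrier_mat (m * p) (n * q)"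
    and "\<And>i j a b. i < m \<Longrightarrow> j < n \<Longrightarrow> a < p \<Longrightarrow> b < q \<Longrightarrow>
      M $$ (i * p + a, j * q + b) = N $$ (i * p + a, j * q + b)"
  shows "M = N"
proof (rule eq_matI)
  fix r c assume "r < dim_row N" "c < dim_col N"
  then have "r div p < m" "r mod p < p" "c div q < n" "c mod q < q"
    using assms(2) by (auto simp: less_mult_imp_div_less intro!: mod_less_divisor Nat.gr0I)
  then show "M $$ (r, c) = N $$ (r, c)"
    using assms(3)[of "r div p" "c div q" "r mod p" "c mod q"] by simp
qed (use assms in auto)

lemma dim_kron_vec [simp]: "dim_vec (kron_vec u v) = dim_vec u * dim_vec v"
  by (simp add: kron_vec_def)

lemma kron_vec_carrier_vec:
  "u \<in> carrier_vec n \<Longrightarrow> v \<in> carrier_vec q \<Longrightarrow> kron_vec u v \<in> carrier_vec (n * q)"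
  by (simp add: kron_vec_def)

lemma index_kron_vec:
  assumes "u \<in> carrier_vec n" "v \<in> carrier_vec q" "i < n" "a < q"
  shows "kron_vec u v $ (i * q + a) = u $ i * v $ a"
  using assms by (simp add: kron_vec_def mult_add_less_nat mult_add_div_nat mult_add_mod_nat)

lemma kron_vec_eqI:
  assumes "dim_vec x = n * q" "dim_vec y = n * q"
    and "\<And>i a. i < n \<Longrightarrow> a < q \<Longrightarrow> x $ (i * q + a) = y $ (i * q + a)"
  shows "x = y"
proof (rule eq_vecI)
  fix r assume "r < dim_vec y"
  then have "r div q < n" "r mod q < q"
    using assms(2) by (auto simp: less_mult_imp_div_less intro!: mod_less_divisor Nat.gr0I)
  then show "x $ r = y $ r"
    using assms(3)[of "r div q" "r mod q"] by simp
qed (use assms in auto)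

lemma kron_mat_mult:
  assumes A: "A \<in> carrier_mat m n" and B: "B \<in> carrier_mat p q"
    and C: "C \<in> carrier_mat n r" and D: "D \<in> carrier_mat q s"
  shows "kron_mat A B * kron_mat C D = kron_mat (A * C) (B * D)"
proof (rule kron_mat_eqI)
  have AB: "kron_mat A B \<in> carrier_mat (m * p) (n * q)" and CD: "kron_mat C D \<in> carrier_mat (n * q) (r * s)"
    using A B C D by (simp_all add: kron_mat_carrier_mat)
  then show "kron_mat A B * kron_mat C D \<in> carrier_mat (m * p) (r * s)"
    by auto
  show "kron_mat (A * C) (B * D) \<in> carrier_mat (m * p) (r * s)"
    using A B C D by auto
  fix i j a b assume ij: "i < m" "j < r" "a < p" "b < s"
  have "(kron_mat A B * kron_mat C D) $$ (i * p + a, j * s + b)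
      = (\<Sum>t<n * q. kron_mat A B $$ (i * p + a, t) * kron_mat C D $$ (t, j * s + b))"
    using index_mult_mat_sum[OF AB CD mult_add_less_nat[OF ij(1,3)] mult_add_less_nat[OF ij(2,4)]] .
  also have "\<dots> = (\<Sum>l<n. \<Sum>t<q. (A $$ (i, l) * C $$ (l, j)) * (B $$ (a, t) * D $$ (t, b)))"
    unfolding sum_lessThan_mult_nat
    by (intro sum.cong refl) (simp add: index_kron_mat[OF A B] index_kron_mat[OF C D] ij mult_ac)
  also have "\<dots> = (A * C) $$ (i, j) * (B * D) $$ (a, b)"
    by (simp add: index_mult_mat_sum[OF A C] index_mult_mat_sum[OF B D] ij sum_product)
  also have "\<dots> = kron_mat (A * C) (B * D) $$ (i * p + a, j * s + b)"
    using A B C D ij by (intro index_kron_mat[symmetric]) auto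
  finally show "(kron_mat A B * kron_mat C D) $$ (i * p + a, j * s + b) = \<dots>" .
qed

lemma kron_mat_mult_vec:
  assumes A: "A \<in> carrier_mat m n" and B: "B \<in> carrier_mat p q"
    and u: "u \<in> carrier_vec n" and v: "v \<in> carrier_vec q"
  shows "kron_mat A B *\<^sub>v kron_vec u v = kron_vec (A *\<^sub>v u) (B *\<^sub>v v)"
proof (rule kron_vec_eqI)
  have AB: "kron_mat A B \<in> carrier_mat (m * p) (n * q)" and uv: "kron_vec u v \<in> carrier_vec (n * q)"
    using A B u v by (simp_all add: kron_mat_carrier_mat kron_vec_carrier_vec)
  show "dim_vec (kron_mat A B *\<^sub>v kron_vec u v) = m * p"
    using carrier_matD[OF A] carrier_matD[OF B] by simp
  show "dim_vec (kron_vec (A *\<^sub>v u) (B *\<^sub>v v)) = m * p"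
    using A B by auto
  fix i a assume ia: "i < m" "a < p"
  have "(kron_mat A B *\<^sub>v kron_vec u v) $ (i * p + a)
      = (\<Sum>t<n * q. kron_mat A B $$ (i * p + a, t) * kron_vec u v $ t)"
    using index_mult_mat_vec_sum[OF AB uv mult_add_less_nat[OF ia]] .
  also have "\<dots> = (\<Sum>l<n. \<Sum>t<q. (A $$ (i, l) * u $ l) * (B $$ (a, t) * v $ t))"
    unfolding sum_lessThan_mult_nat
    by (intro sum.cong refl) (simp add: index_kron_mat[OF A B] index_kron_vec[OF u v] ia mult_ac)
  also have "\<dots> = (A *\<^sub>v u) $ i * (B *\<^sub>v v) $ a"
    by (simp add: index_mult_mat_vec_sum[OF A u] index_mult_mat_vec_sum[OF B v] ia sum_product)
  also have "\<dots> = kron_vec (A *\<^sub>v u) (B *\<^sub>v v) $ (i * p + a)"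
    by (rule index_kron_vec[symmetric, OF mult_mat_vec_carrier[OF A u] mult_mat_vec_carrier[OF B v] ia])
  finally show "(kron_mat A B *\<^sub>v kron_vec u v) $ (i * p + a) = \<dots>" .
qed

lemma adjoint_kron_mat:
  assumes A: "A \<in> carrier_mat m n" and B: "B \<in> carrier_mat p q"
  shows "adjoint (kron_mat A B) = kron_mat (adjoint A) (adjoint B)"
proof (rule kron_mat_eqI)
  show "adjoint (kron_mat A B) \<in> carrier_mat (n * q) (m * p)"
    "kron_mat (adjoint A) (adjoint B) \<in> carrier_mat (n * q) (m * p)"
    using A B by auto
  have A': "adjoint A \<in> carrier_mat n m" and B': "adjoint B \<in> carrier_mat q p"
    using A B by auto
  fix i j a b assume "i < n" "j < m" "a < q" "b < p"
  then show "adjoint (kron_mat A B) $$ (i * q + a, j * p + b) = kron_mat (adjoint A) (adjoint B) $$ (i * q + a, j * p + b)"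
    using A B mult_add_less_nat[of i n a q] mult_add_less_nat[of j m b p]
    by (simp add: index_kron_mat[OF A' B'] index_kron_mat[OF A B])
qed

lemma kron_mat_add_left:
  assumes "A \<in> carrier_mat m n" "A' \<in> carrier_mat m n" "B \<in> carrier_mat p q"
  shows "kron_mat (A + A') B = kron_mat A B + kron_mat A' B"
  by (rule kron_mat_eqI[of _ m p n q])
    (use assms mult_add_less_nat in \<open>auto simp: index_kron_mat[of _ m n _ p q] distrib_right\<close>)

lemma kron_mat_smult_left:
  assumes "A \<in> carrier_mat m n" "B \<in> carrier_mat p q"
  shows "kron_mat (c \<cdot>\<^sub>m A) B = c \<cdot>\<^sub>m kron_mat A B"
  by (rule kron_mat_eqI[of _ m p n q])
    (use assms mult_add_less_nat in \<open>auto simp: index_kron_mat[of _ m n _ p q]\<close>)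

lemma kron_mat_smult_right:
  assumes "A \<in> carrier_mat m n" "B \<in> carrier_mat p q"
  shows "kron_mat A (c \<cdot>\<^sub>m B) = c \<cdot>\<^sub>m kron_mat A B"
  by (rule kron_mat_eqI[of _ m p n q])
    (use assms mult_add_less_nat in \<open>auto simp: index_kron_mat[of _ m n _ p q]\<close>)

lemma kron_mat_one: "kron_mat (1\<^sub>m m) (1\<^sub>m p) = 1\<^sub>m (m * p)"
proof (rule kron_mat_eqI)
  fix i j a b assume "i < m" "j < m" "a < p" "b < p"
  then show "kron_mat (1\<^sub>m m) (1\<^sub>m p) $$ (i * p + a, j * p + b) = 1\<^sub>m (m * p) $$ (i * p + a, j * p + b)"
    using mult_add_less_nat[of i m a p] mult_add_less_nat[of j m b p]
    by (auto simp: index_kron_mat[of _ m m _ p p] dest: arg_cong[of _ _ "\<lambda>x. x div p"]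
      arg_cong[of _ _ "\<lambda>x. x mod p"] simp: mult_add_div_nat mult_add_mod_nat)
qed auto

lemma kron_mat_zero_left:
  assumes "B \<in> carrier_mat p q"
  shows "kron_mat (0\<^sub>m m n) B = 0\<^sub>m (m * p) (n * q)"
  by (rule kron_mat_eqI[of _ m p n q])
    (use assms mult_add_less_nat in \<open>auto simp: index_kron_mat[of _ m n _ p q]\<close>)

lemma kron_vec_add_left:
  assumes "u \<in> carrier_vec n" "u' \<in> carrier_vec n"
  shows "kron_vec (u + u') v = kron_vec u v + kron_vec u' v"
  by (rule kron_vec_eqI[of _ n "dim_vec v"])
    (use assms in \<open>auto simp: index_kron_vec[of _ n v "dim_vec v"] mult_add_less_nat distrib_right\<close>)

lemma kron_vec_smult_right: "kron_vec u (c \<cdot>\<^sub>v v) = kron_vec (c \<cdot>\<^sub>v u) v"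
proof (rule kron_vec_eqI[of _ "dim_vec u" "dim_vec v"])
  fix i a assume "i < dim_vec u" "a < dim_vec v"
  then show "kron_vec u (c \<cdot>\<^sub>v v) $ (i * dim_vec v + a) = kron_vec (c \<cdot>\<^sub>v u) v $ (i * dim_vec v + a)"
    using index_kron_vec[of u "dim_vec u" "c \<cdot>\<^sub>v v" "dim_vec v" i a]
      index_kron_vec[of "c \<cdot>\<^sub>v u" "dim_vec u" v "dim_vec v" i a]
    by simp
qed auto

section \<open>The matrix \<open>\<Lambda>\<^sub>k\<close> and the state \<open>|\<lambda>\<^sub>k\<rangle>\<close>\<close>

lemma Lambda_carrier [simp]: "Lambda k \<in> carrier_mat 2 2"
  unfolding Lambda_def mat_of_rows_list_def carrier_mat_def by simp

lemma dim_Lambda [simp]: "dim_row (Lambda k) = 2" "dim_col (Lambda k) = 2"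
  using Lambda_carrier[of k] unfolding carrier_mat_def by simp_all

lemma index_Lambda:
  "Lambda k $$ (0, 0) = 0" "Lambda k $$ (0, Suc 0) = 1"
  "Lambda k $$ (Suc 0, 0) = zeta (2 ^ (k - 1))" "Lambda k $$ (Suc 0, Suc 0) = 0"
  unfolding Lambda_def mat_of_rows_list_def by simp_all

lemma mat2_eqI:
  assumes "A \<in> carrier_mat 2 2" "B \<in> carrier_mat 2 2"
    and "A $$ (0, 0) = B $$ (0, 0)" "A $$ (0, Suc 0) = B $$ (0, Suc 0)"
    and "A $$ (Suc 0, 0) = B $$ (Suc 0, 0)" "A $$ (Suc 0, Suc 0) = B $$ (Suc 0, Suc 0)"
  shows "A = B"
proof (rule eq_matI)
  fix i j assume "i < dim_row B" "j < dim_col B"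
  then have "i = 0 \<or> i = Suc 0" "j = 0 \<or> j = Suc 0"
    using assms(2) by (simp_all add: less_2_cases)
  then show "A $$ (i, j) = B $$ (i, j)"
    using assms(3-6) by auto
qed (use assms in auto)

lemma adjoint_Lambda: "adjoint (Lambda k) = cnj (zeta (2 ^ (k - 1))) \<cdot>\<^sub>m Lambda k"
proof (rule mat2_eqI)
  show "adjoint (Lambda k) \<in> carrier_mat 2 2"
    by (rule adjoint_carrier_mat[OF Lambda_carrier])
  show "cnj (zeta (2 ^ (k - 1))) \<cdot>\<^sub>m Lambda k \<in> carrier_mat 2 2"
    by simp
  have "cnj (zeta (2 ^ (k - 1))) * zeta (2 ^ (k - 1)) = 1"
    using zeta_mult_cnj[of "2 ^ (k - 1)"] by (simp only: mult.commute)
  then show "adjoint (Lambda k) $$ (Suc 0, 0) = (cnj (zeta (2 ^ (k - 1))) \<cdot>\<^sub>m Lambda k) $$ (Suc 0, 0)"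
    by (simp add: index_Lambda)
  show "adjoint (Lambda k) $$ (0, 0) = (cnj (zeta (2 ^ (k - 1))) \<cdot>\<^sub>m Lambda k) $$ (0, 0)"
    by (simp add: index_Lambda)
  show "adjoint (Lambda k) $$ (0, Suc 0) = (cnj (zeta (2 ^ (k - 1))) \<cdot>\<^sub>m Lambda k) $$ (0, Suc 0)"
    by (simp add: index_Lambda)
  show "adjoint (Lambda k) $$ (Suc 0, Suc 0) = (cnj (zeta (2 ^ (k - 1))) \<cdot>\<^sub>m Lambda k) $$ (Suc 0, Suc 0)"
    by (simp add: index_Lambda)
qed

lemma sum_lessThan_2: "(\<Sum>i<2. f i) = f 0 + f (Suc 0)"
  by (simp add: eval_nat_numeral)

lemma Lambda_mult_adjoint: "Lambda k * adjoint (Lambda k) = 1\<^sub>m 2"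
  using zeta_mult_cnj[of "2 ^ (k - 1)"]
  by (intro mat2_eqI)
    (simp_all add: index_mult_adjoint[OF Lambda_carrier Lambda_carrier] sum_lessThan_2 index_Lambda
      mult_carrier_mat[OF Lambda_carrier adjoint_carrier_mat[OF Lambda_carrier]] del: index_mult_mat)

lemma dim_lambda_state [simp]: "dim_vec (lambda_state k) = 2"
  unfolding lambda_state_def by simp

lemma lambda_state_carrier [simp]: "lambda_state k \<in> carrier_vec 2"
  by (rule carrier_vecI) simp

lemma index_lambda_state:
  "lambda_state k $ 0 = 1 / complex_of_real (sqrt 2)"
  "lambda_state k $ Suc 0 = zeta (2 ^ k) / complex_of_real (sqrt 2)"
  unfolding lambda_state_def by simp_all

lemma lambda_state_normalized: "(\<Sum>i<2. (cmod (lambda_state k $ i))\<^sup>2) = 1"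
proof -
  have "cmod (zeta (2 ^ k)) = 1"
    by (simp add: zeta_def)
  then show ?thesis
    by (simp add: sum_lessThan_2 index_lambda_state norm_divide power_divide)
qed

lemma Lambda_mult_lambda_state: "Lambda k *\<^sub>v lambda_state k = zeta (2 ^ k) \<cdot>\<^sub>v lambda_state k"
proof (rule eq_vecI)
  show "dim_vec (Lambda k *\<^sub>v lambda_state k) = dim_vec (zeta (2 ^ k) \<cdot>\<^sub>v lambda_state k)"
    by simp
  have w: "zeta (2 ^ (k - 1)) = zeta (2 ^ k) * zeta (2 ^ k)"
    using zeta_two_power_square[of k] by (simp only: power2_eq_square)
  fix i assume "i < dim_vec (zeta (2 ^ k) \<cdot>\<^sub>v lambda_state k)"
  then have "i < 2"
    by simp
  then have entry: "(Lambda k *\<^sub>v lambda_state k) $ i = (\<Sum>l<2. Lambda k $$ (i, l) * lambda_state k $ l)"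
    by (rule index_mult_mat_vec_sum[OF Lambda_carrier lambda_state_carrier])
  from \<open>i < 2\<close> have "i = 0 \<or> i = Suc 0"
    by (rule less_2_cases)
  then show "(Lambda k *\<^sub>v lambda_state k) $ i = (zeta (2 ^ k) \<cdot>\<^sub>v lambda_state k) $ i"
    unfolding entry sum_lessThan_2 using w by (auto simp: index_Lambda index_lambda_state)
qed

section \<open>Splitting matrices over \<open>\<int>[1/2, \<zeta>\<^sub>2\<^sub>^\<^sub>k]\<close>\<close>

lemma entries_inD: "entries_in R A \<Longrightarrow> i < dim_row A \<Longrightarrow> j < dim_col A \<Longrightarrow> A $$ (i, j) \<in> R"
  by (simp add: entries_in_def)

lemma entries_in_add:
  assumes "entries_in (Zhalf_zeta n) A" "entries_in (Zhalf_zeta n) B"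
    and "A \<in> carrier_mat r c" "B \<in> carrier_mat r c"
  shows "entries_in (Zhalf_zeta n) (A + B)"
  using assms by (auto simp: entries_in_def intro: Zhalf_zeta.add)

lemma entries_in_smult:
  "a \<in> Zhalf_zeta n \<Longrightarrow> entries_in (Zhalf_zeta n) A \<Longrightarrow> entries_in (Zhalf_zeta n) (a \<cdot>\<^sub>m A)"
  by (auto simp: entries_in_def intro: Zhalf_zeta.mult)

lemma entries_in_one: "entries_in (Zhalf_zeta n) (1\<^sub>m d)"
  by (simp add: entries_in_def Zhalf_zeta.one Zhalf_zeta_zero)

lemma entries_in_zero: "entries_in (Zhalf_zeta n) (0\<^sub>m r c)"
  by (simp add: entries_in_def Zhalf_zeta_zero)

lemma entries_in_mult_adjoint:
  assumes "entries_in (Zhalf_zeta n) A" "entries_in (Zhalf_zeta n) B"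
    and A: "A \<in> carrier_mat r l" and B: "B \<in> carrier_mat s l"
  shows "entries_in (Zhalf_zeta n) (A * adjoint B)"
  unfolding entries_in_def
proof (intro allI impI)
  fix i j assume "i < dim_row (A * adjoint B)" "j < dim_col (A * adjoint B)"
  then have "i < r" "j < s"
    using A B by auto
  then show "(A * adjoint B) $$ (i, j) \<in> Zhalf_zeta n"
    using assms unfolding index_mult_adjoint[OF A B \<open>i < r\<close> \<open>j < s\<close>]
    by (intro Zhalf_zeta_sum Zhalf_zeta.mult Zhalf_zeta_cnj) (auto simp: entries_in_def)
qed

lemma entries_in_kron_mat:
  assumes "entries_in (Zhalf_zeta n) A" "entries_in (Zhalf_zeta n) B"
  shows "entries_in (Zhalf_zeta n) (kron_mat A B)"
  unfolding entries_in_def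
proof (intro allI impI)
  fix i j assume ij: "i < dim_row (kron_mat A B)" "j < dim_col (kron_mat A B)"
  then have "i div dim_row B < dim_row A" "i mod dim_row B < dim_row B"
    "j div dim_col B < dim_col A" "j mod dim_col B < dim_col B"
    by (auto simp: less_mult_imp_div_less intro!: mod_less_divisor Nat.gr0I)
  then show "kron_mat A B $$ (i, j) \<in> Zhalf_zeta n"
    using assms ij by (auto simp: kron_mat_def entries_in_def intro!: Zhalf_zeta.mult)
qed

lemma entries_in_Lambda: "entries_in (Zhalf_zeta (2 ^ (k - 1))) (Lambda k)"
  unfolding entries_in_def
proof (intro allI impI)
  fix i j assume "i < dim_row (Lambda k)" "j < dim_col (Lambda k)"
  then have "i = 0 \<or> i = Suc 0" "j = 0 \<or> j = Suc 0"
    by (simp_all add: less_2_cases)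
  then show "Lambda k $$ (i, j) \<in> Zhalf_zeta (2 ^ (k - 1))"
    by (auto simp: index_Lambda Zhalf_zeta_zero Zhalf_zeta.one Zhalf_zeta.zeta)
qed

lemma mat_Zhalf_zeta_independent:
  assumes "k \<ge> 2"
    and carriers: "M \<in> carrier_mat r c" "N \<in> carrier_mat r c" "M' \<in> carrier_mat r c" "N' \<in> carrier_mat r c"
    and entries: "entries_in (Zhalf_zeta (2 ^ (k - 1))) M" "entries_in (Zhalf_zeta (2 ^ (k - 1))) N"
      "entries_in (Zhalf_zeta (2 ^ (k - 1))) M'" "entries_in (Zhalf_zeta (2 ^ (k - 1))) N'"
    and eq: "M + zeta (2 ^ k) \<cdot>\<^sub>m N = M' + zeta (2 ^ k) \<cdot>\<^sub>m N'"
  shows "M = M' \<and> N = N'"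
proof -
  obtain m where k: "k = Suc (Suc m)"
    using \<open>k \<ge> 2\<close> by (metis add_2_eq_Suc le_Suc_ex)
  have entry: "M $$ (i, j) = M' $$ (i, j) \<and> N $$ (i, j) = N' $$ (i, j)" if "i < r" "j < c" for i j
  proof -
    have "M $$ (i, j) + zeta (2 ^ k) * N $$ (i, j) = M' $$ (i, j) + zeta (2 ^ k) * N' $$ (i, j)"
      using arg_cong[OF eq, of "\<lambda>X. X $$ (i, j)"] carriers that by simp
    then have "(M $$ (i, j) - M' $$ (i, j)) + zeta (2 ^ Suc (Suc m)) * (N $$ (i, j) - N' $$ (i, j)) = 0"
      by (simp add: k algebra_simps)
    moreover have "M $$ (i, j) - M' $$ (i, j) \<in> Zhalf_zeta (2 ^ Suc m)"
      "N $$ (i, j) - N' $$ (i, j) \<in> Zhalf_zeta (2 ^ Suc m)"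
      using entries carriers that by (auto simp: k entries_in_def intro!: Zhalf_zeta_diff)
    ultimately show ?thesis
      using Zhalf_zeta_independent by fastforce
  qed
  show ?thesis
    using carriers entry by (auto intro!: eq_matI)
qed

lemma is_decomp_exists:
  assumes "k \<ge> 1" and "entries_in (Zhalf_zeta (2 ^ k)) U"
  shows "\<exists>AB. is_decomp k U AB"
proof -
  let ?R = "Zhalf_zeta (2 ^ (k - 1))" and ?z = "zeta (2 ^ k)"
  define split where "split i j = (SOME ab. fst ab \<in> ?R \<and> snd ab \<in> ?R \<and> U $$ (i, j) = fst ab + ?z * snd ab)" for i j
  have split: "fst (split i j) \<in> ?R \<and> snd (split i j) \<in> ?R \<and> U $$ (i, j) = fst (split i j) + ?z * snd (split i j)"
    if ij: "i < dim_row U" "j < dim_col U" for i j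
  proof -
    have "(2::nat) ^ k = 2 * 2 ^ (k - 1)"
      using \<open>k \<ge> 1\<close> by (simp add: power_eq_if)
    then obtain a b where "a \<in> ?R" "b \<in> ?R" "U $$ (i, j) = a + ?z * b"
      using Zhalf_zeta_double_split[of "U $$ (i, j)" "2 ^ (k - 1)"] entries_inD[OF assms(2) ij]
      by auto
    then show ?thesis
      unfolding split_def
      by (intro someI[of "\<lambda>ab. fst ab \<in> ?R \<and> snd ab \<in> ?R \<and> U $$ (i, j) = fst ab + ?z * snd ab" "(a, b)"]) simp
  qed
  define A where "A = mat (dim_row U) (dim_col U) (\<lambda>(i, j). fst (split i j))"
  define B where "B = mat (dim_row U) (dim_col U) (\<lambda>(i, j). snd (split i j))"
  have "is_decomp k U (A, B)"
    unfolding is_decomp_def fst_conv snd_conv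
  proof (intro conjI)
    show "A \<in> carrier_mat (dim_row U) (dim_col U)" "B \<in> carrier_mat (dim_row U) (dim_col U)"
      by (simp_all add: A_def B_def)
    show "entries_in ?R A" "entries_in ?R B"
      using split by (simp_all add: A_def B_def entries_in_def)
    show "U = A + ?z \<cdot>\<^sub>m B"
      by (rule eq_matI) (use split in \<open>simp_all add: A_def B_def\<close>)
  qed
  then show ?thesis ..
qed

lemma is_decomp_unique:
  assumes "k \<ge> 2" and "is_decomp k U (A, B)" and "is_decomp k U (A', B')"
  shows "(A, B) = (A', B')"
proof -
  let ?R = "Zhalf_zeta (2 ^ (k - 1))"
  have AB: "A \<in> carrier_mat (dim_row U) (dim_col U)" "B \<in> carrier_mat (dim_row U) (dim_col U)"
    "entries_in ?R A" "entries_in ?R B" "U = A + zeta (2 ^ k) \<cdot>\<^sub>m B"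
    using assms(2) unfolding is_decomp_def fst_conv snd_conv by blast+
  have AB': "A' \<in> carrier_mat (dim_row U) (dim_col U)" "B' \<in> carrier_mat (dim_row U) (dim_col U)"
    "entries_in ?R A'" "entries_in ?R B'" "U = A' + zeta (2 ^ k) \<cdot>\<^sub>m B'"
    using assms(3) unfolding is_decomp_def fst_conv snd_conv by blast+
  have "A = A' \<and> B = B'"
    using mat_Zhalf_zeta_independent[OF assms(1) AB(1,2) AB'(1,2) AB(3,4) AB'(3,4)] AB(5) AB'(5) by argo
  then show ?thesis
    by simp
qed

lemma mult_cnj_add_unit:
  fixes z :: complex
  assumes "z * cnj z = 1"
  shows "(a + z * b) * cnj (a' + z * b') = (a * cnj a' + b * cnj b') + z * (cnj (z ^ 2) * (a * cnj b') + b * cnj a')"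
proof -
  have "(a + z * b) * cnj (a' + z * b') = a * cnj a' + cnj z * (a * cnj b') + z * (b * cnj a') + (z * cnj z) * (b * cnj b')"
    by (simp add: algebra_simps)
  moreover have "z * cnj (z ^ 2) = cnj z"
    using assms by (simp add: power2_eq_square mult.assoc[symmetric])
  ultimately show ?thesis
    using assms by (simp add: algebra_simps)
qed

lemma mult_adjoint_add_smult:
  assumes A: "A \<in> carrier_mat d n" and B: "B \<in> carrier_mat d n" and z: "z * cnj z = 1"
  shows "(A + z \<cdot>\<^sub>m B) * adjoint (A + z \<cdot>\<^sub>m B)
    = (A * adjoint A + B * adjoint B) + z \<cdot>\<^sub>m (cnj (z ^ 2) \<cdot>\<^sub>m (A * adjoint B) + B * adjoint A)"
proof (rule eq_matI)
  have U: "A + z \<cdot>\<^sub>m B \<in> carrier_mat d n"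
    using A B by simp
  fix i j assume "i < dim_row (A * adjoint A + B * adjoint B + z \<cdot>\<^sub>m (cnj (z ^ 2) \<cdot>\<^sub>m (A * adjoint B) + B * adjoint A))"
    "j < dim_col (A * adjoint A + B * adjoint B + z \<cdot>\<^sub>m (cnj (z ^ 2) \<cdot>\<^sub>m (A * adjoint B) + B * adjoint A))"
  then have ij: "i < d" "j < d"
    using A B by auto
  have "((A + z \<cdot>\<^sub>m B) * adjoint (A + z \<cdot>\<^sub>m B)) $$ (i, j)
      = (\<Sum>l<n. ((A + z \<cdot>\<^sub>m B) $$ (i, l)) * cnj ((A + z \<cdot>\<^sub>m B) $$ (j, l)))"
    by (rule index_mult_adjoint[OF U U ij])
  also have "\<dots> = (\<Sum>l<n. (A $$ (i, l) * cnj (A $$ (j, l)) + B $$ (i, l) * cnj (B $$ (j, l)))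
      + z * (cnj (z ^ 2) * (A $$ (i, l) * cnj (B $$ (j, l))) + B $$ (i, l) * cnj (A $$ (j, l))))"
  proof (rule sum.cong[OF refl])
    fix l assume "l \<in> {..<n}"
    then have e: "(A + z \<cdot>\<^sub>m B) $$ (i, l) = A $$ (i, l) + z * B $$ (i, l)"
      "(A + z \<cdot>\<^sub>m B) $$ (j, l) = A $$ (j, l) + z * B $$ (j, l)"
      using A B ij by auto
    show "(A + z \<cdot>\<^sub>m B) $$ (i, l) * cnj ((A + z \<cdot>\<^sub>m B) $$ (j, l))
      = (A $$ (i, l) * cnj (A $$ (j, l)) + B $$ (i, l) * cnj (B $$ (j, l)))
        + z * (cnj (z ^ 2) * (A $$ (i, l) * cnj (B $$ (j, l))) + B $$ (i, l) * cnj (A $$ (j, l)))"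
      unfolding e by (rule mult_cnj_add_unit[OF z])
  qed
  also have "\<dots> = (A * adjoint A) $$ (i, j) + (B * adjoint B) $$ (i, j)
      + z * (cnj (z ^ 2) * (A * adjoint B) $$ (i, j) + (B * adjoint A) $$ (i, j))"
    by (simp add: index_mult_adjoint[OF A A ij] index_mult_adjoint[OF B B ij]
      index_mult_adjoint[OF A B ij] index_mult_adjoint[OF B A ij] sum.distrib sum_distrib_left distrib_left
      del: index_mult_mat)
  also have "\<dots> = (A * adjoint A + B * adjoint B + z \<cdot>\<^sub>m (cnj (z ^ 2) \<cdot>\<^sub>m (A * adjoint B) + B * adjoint A)) $$ (i, j)"
    using A B ij by simp
  finally show "((A + z \<cdot>\<^sub>m B) * adjoint (A + z \<cdot>\<^sub>m B)) $$ (i, j) = \<dots>" .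
qed (use A B in auto)

lemma unitary_decomp_relations:
  assumes "k \<ge> 2" and A: "A \<in> carrier_mat d d" and B: "B \<in> carrier_mat d d"
    and eA: "entries_in (Zhalf_zeta (2 ^ (k - 1))) A" and eB: "entries_in (Zhalf_zeta (2 ^ (k - 1))) B"
    and unitary: "(A + zeta (2 ^ k) \<cdot>\<^sub>m B) * adjoint (A + zeta (2 ^ k) \<cdot>\<^sub>m B) = 1\<^sub>m d"
  shows "A * adjoint A + B * adjoint B = 1\<^sub>m d"
    and "cnj (zeta (2 ^ (k - 1))) \<cdot>\<^sub>m (A * adjoint B) + B * adjoint A = 0\<^sub>m d d"
proof -
  let ?R = "Zhalf_zeta (2 ^ (k - 1))" and ?w = "cnj (zeta (2 ^ (k - 1)))"
  let ?M = "A * adjoint A + B * adjoint B" and ?N = "?w \<cdot>\<^sub>m (A * adjoint B) + B * adjoint A"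
  have "(A + zeta (2 ^ k) \<cdot>\<^sub>m B) * adjoint (A + zeta (2 ^ k) \<cdot>\<^sub>m B) = ?M + zeta (2 ^ k) \<cdot>\<^sub>m ?N"
    using mult_adjoint_add_smult[OF A B zeta_mult_cnj[of "2 ^ k"]] unfolding zeta_two_power_square .
  also have "1\<^sub>m d = 1\<^sub>m d + zeta (2 ^ k) \<cdot>\<^sub>m 0\<^sub>m d d"
    by simp
  ultimately have eq: "?M + zeta (2 ^ k) \<cdot>\<^sub>m ?N = 1\<^sub>m d + zeta (2 ^ k) \<cdot>\<^sub>m 0\<^sub>m d d"
    using unitary by argo
  have products: "A * adjoint A \<in> carrier_mat d d" "B * adjoint B \<in> carrier_mat d d"
    "A * adjoint B \<in> carrier_mat d d" "B * adjoint A \<in> carrier_mat d d"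
    using A B adjoint_carrier_mat[OF A] adjoint_carrier_mat[OF B] by (metis mult_carrier_mat)+
  have "?M \<in> carrier_mat d d" "?N \<in> carrier_mat d d"
    using products by (metis add_carrier_mat smult_carrier_mat)+
  moreover have "entries_in ?R ?M"
    by (rule entries_in_add[OF entries_in_mult_adjoint[OF eA eA A A] entries_in_mult_adjoint[OF eB eB B B]
      products(1,2)])
  moreover have "entries_in ?R ?N"
    using products(3,4) by (intro entries_in_add[OF entries_in_smult[OF Zhalf_zeta_cnj[OF Zhalf_zeta.zeta]
      entries_in_mult_adjoint[OF eA eB A B]] entries_in_mult_adjoint[OF eB eA B A]] smult_carrier_mat)
  ultimately have "?M = 1\<^sub>m d \<and> ?N = 0\<^sub>m d d"
    using mat_Zhalf_zeta_independent[OF \<open>k \<ge> 2\<close> _ _ one_carrier_mat zero_carrier_mat _ _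
      entries_in_one entries_in_zero eq] by blast
  then show "?M = 1\<^sub>m d" "?N = 0\<^sub>m d d"
    by simp_all
qed

section \<open>The catalytic embedding\<close>

definition phi_blocks :: "nat \<Rightarrow> complex mat \<Rightarrow> complex mat \<Rightarrow> complex mat" where
  "phi_blocks k A B = kron_mat A (1\<^sub>m 2) + kron_mat B (Lambda k)"

lemma phi_blocks_carrier:
  "A \<in> carrier_mat d d \<Longrightarrow> B \<in> carrier_mat d d \<Longrightarrow> phi_blocks k A B \<in> carrier_mat (d * 2) (d * 2)"
  unfolding phi_blocks_def
  by (intro add_carrier_mat kron_mat_carrier_mat one_carrier_mat Lambda_carrier)

lemma phi_blocks_entries_in:
  assumes "A \<in> carrier_mat d d" "B \<in> carrier_mat d d"
    and "entries_in (Zhalf_zeta (2 ^ (k - 1))) A" "entries_in (Zhalf_zeta (2 ^ (k - 1))) B"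
  shows "entries_in (Zhalf_zeta (2 ^ (k - 1))) (phi_blocks k A B)"
  unfolding phi_blocks_def
  by (rule entries_in_add[OF entries_in_kron_mat[OF assms(3) entries_in_one]
    entries_in_kron_mat[OF assms(4) entries_in_Lambda] kron_mat_carrier_mat[OF assms(1) one_carrier_mat]
    kron_mat_carrier_mat[OF assms(2) Lambda_carrier]])

lemma phi_blocks_catalytic:
  assumes A: "A \<in> carrier_mat d d" and B: "B \<in> carrier_mat d d" and u: "u \<in> carrier_vec d"
  shows "phi_blocks k A B *\<^sub>v kron_vec u (lambda_state k)
    = kron_vec ((A + zeta (2 ^ k) \<cdot>\<^sub>m B) *\<^sub>v u) (lambda_state k)"
proof -
  let ?z = "zeta (2 ^ k)" and ?l = "lambda_state k"
  have "phi_blocks k A B *\<^sub>v kron_vec u ?l = kron_mat A (1\<^sub>m 2) *\<^sub>v kron_vec u ?l + kron_mat B (Lambda k) *\<^sub>v kron_vec u ?l"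
    unfolding phi_blocks_def
    by (rule add_mult_distrib_mat_vec[OF kron_mat_carrier_mat[OF A one_carrier_mat]
      kron_mat_carrier_mat[OF B Lambda_carrier] kron_vec_carrier_vec[OF u lambda_state_carrier]])
  also have "\<dots> = kron_vec (A *\<^sub>v u) ?l + kron_vec (?z \<cdot>\<^sub>v (B *\<^sub>v u)) ?l"
    by (simp add: kron_mat_mult_vec[OF A one_carrier_mat u lambda_state_carrier]
      kron_mat_mult_vec[OF B Lambda_carrier u lambda_state_carrier] Lambda_mult_lambda_state kron_vec_smult_right)
  also have "\<dots> = kron_vec (A *\<^sub>v u + ?z \<cdot>\<^sub>v (B *\<^sub>v u)) ?l"
    by (rule kron_vec_add_left[symmetric, of _ d]) (use A B u in auto)
  also have "A *\<^sub>v u + ?z \<cdot>\<^sub>v (B *\<^sub>v u) = (A + ?z \<cdot>\<^sub>m B) *\<^sub>v u"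
    using add_mult_distrib_mat_vec[OF A smult_carrier_mat[OF B] u] by (simp add: smult_mat_mult_vec[OF B u])
  finally show ?thesis .
qed

lemma adjoint_phi_blocks:
  assumes A: "A \<in> carrier_mat d d" and B: "B \<in> carrier_mat d d"
  shows "adjoint (phi_blocks k A B)
    = kron_mat (adjoint A) (1\<^sub>m 2) + kron_mat (adjoint B) (cnj (zeta (2 ^ (k - 1))) \<cdot>\<^sub>m Lambda k)"
  unfolding phi_blocks_def adjoint_add[OF kron_mat_carrier_mat[OF A one_carrier_mat] kron_mat_carrier_mat[OF B Lambda_carrier]]
    adjoint_kron_mat[OF A one_carrier_mat] adjoint_kron_mat[OF B Lambda_carrier] adjoint_one adjoint_Lambda ..

lemma phi_blocks_mult_adjoint:
  assumes A: "A \<in> carrier_mat d d" and B: "B \<in> carrier_mat d d"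
    and orth: "A * adjoint A + B * adjoint B = 1\<^sub>m d"
    and cross: "cnj (zeta (2 ^ (k - 1))) \<cdot>\<^sub>m (A * adjoint B) + B * adjoint A = 0\<^sub>m d d"
  shows "phi_blocks k A B * adjoint (phi_blocks k A B) = 1\<^sub>m (d * 2)"
proof -
  let ?w = "cnj (zeta (2 ^ (k - 1)))" and ?I = "1\<^sub>m 2 :: complex mat" and ?L = "Lambda k"
  have I: "?I \<in> carrier_mat 2 2" and L: "?L \<in> carrier_mat 2 2" and wL: "?w \<cdot>\<^sub>m ?L \<in> carrier_mat 2 2"
    by simp_all
  have A': "adjoint A \<in> carrier_mat d d" and B': "adjoint B \<in> carrier_mat d d"
    using A B by (simp_all add: adjoint_carrier_mat)
  have kAI: "kron_mat A ?I \<in> carrier_mat (d * 2) (d * 2)" and kBL: "kron_mat B ?L \<in> carrier_mat (d * 2) (d * 2)"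
    and kAI': "kron_mat (adjoint A) ?I \<in> carrier_mat (d * 2) (d * 2)"
    and kBL': "kron_mat (adjoint B) (?w \<cdot>\<^sub>m ?L) \<in> carrier_mat (d * 2) (d * 2)"
    using A B A' B' by (simp_all add: kron_mat_carrier_mat)
  have P: "A * adjoint A \<in> carrier_mat d d" "B * adjoint B \<in> carrier_mat d d"
    "A * adjoint B \<in> carrier_mat d d" "B * adjoint A \<in> carrier_mat d d"
    using A B A' B' by (metis mult_carrier_mat)+
  have LL: "?L * (?w \<cdot>\<^sub>m ?L) = ?I"
    using Lambda_mult_adjoint[of k] unfolding adjoint_Lambda .
  have "phi_blocks k A B * adjoint (phi_blocks k A B)
      = (kron_mat A ?I * kron_mat (adjoint A) ?I + kron_mat A ?I * kron_mat (adjoint B) (?w \<cdot>\<^sub>m ?L))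
      + (kron_mat B ?L * kron_mat (adjoint A) ?I + kron_mat B ?L * kron_mat (adjoint B) (?w \<cdot>\<^sub>m ?L))"
    unfolding phi_blocks_def[of k A B] adjoint_phi_blocks[OF A B, unfolded phi_blocks_def]
      add_mult_distrib_mat[OF kAI kBL add_carrier_mat[OF kBL']] mult_add_distrib_mat[OF kAI kAI' kBL']
      mult_add_distrib_mat[OF kBL kAI' kBL'] ..
  also have "\<dots> = (kron_mat (A * adjoint A) ?I + kron_mat (A * adjoint B) (?w \<cdot>\<^sub>m ?L))
      + (kron_mat (B * adjoint A) ?L + kron_mat (B * adjoint B) ?I)"
    unfolding kron_mat_mult[OF A I A' I] kron_mat_mult[OF A I B' wL] kron_mat_mult[OF B L A' I]
      kron_mat_mult[OF B L B' wL] LL left_mult_one_mat[OF I] left_mult_one_mat[OF wL] right_mult_one_mat[OF L] ..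
  \<comment> \<open>The cross terms combine to \<open>cross \<otimes> Lambda k\<close> because \<open>adjoint (Lambda k) = ?w \<cdot>\<^sub>m Lambda k\<close>.\<close>
  also have "\<dots> = (kron_mat (A * adjoint A) ?I + kron_mat (B * adjoint B) ?I)
      + (kron_mat (A * adjoint B) (?w \<cdot>\<^sub>m ?L) + kron_mat (B * adjoint A) ?L)"
    using P by (intro add_mat_rearrange[of _ "d * 2" "d * 2"] kron_mat_carrier_mat I L wL)
  also have "\<dots> = kron_mat (A * adjoint A + B * adjoint B) ?I
      + kron_mat (?w \<cdot>\<^sub>m (A * adjoint B) + B * adjoint A) ?L"
    unfolding kron_mat_add_left[OF P(1,2) I] kron_mat_add_left[OF smult_carrier_mat[OF P(3)] P(4) L]
      kron_mat_smult_left[OF P(3) L] kron_mat_smult_right[OF P(3) L] ..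
  also have "\<dots> = 1\<^sub>m (d * 2)"
    unfolding orth cross kron_mat_one kron_mat_zero_left[OF L] by simp
  finally show ?thesis .
qed

lemma unitary_matI:
  assumes "U \<in> carrier_mat d d" and "U * adjoint U = 1\<^sub>m d"
  shows "unitary_mat U"
proof -
  have "adjoint U \<in> carrier_mat d d"
    using assms(1) by (rule adjoint_carrier_mat)
  then have "adjoint U * U = 1\<^sub>m d"
    using mat_mult_left_right_inverse[OF assms(1)] assms(2) by blast
  then show ?thesis
    using assms carrier_matD[OF assms(1)] by (simp add: unitary_mat_def)
qed

lemma phi_eq_phi_blocks:
  assumes "k \<ge> 2" and "is_decomp k U (A, B)"
  shows "phi k U = phi_blocks k A B"
proof -
  have "(THE AB. is_decomp k U AB) = (A, B)"
    using assms is_decomp_unique[OF assms(1)] by (intro the_equality) auto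
  then show ?thesis
    by (simp add: phi_def phi_blocks_def)
qed

lemma unitaries_over_decomp:
  assumes k: "k \<ge> 2" and U: "U \<in> unitaries_over (Zhalf_zeta (2 ^ k))" and Ud: "U \<in> carrier_mat d d"
  obtains A B where "A \<in> carrier_mat d d" "B \<in> carrier_mat d d"
    "entries_in (Zhalf_zeta (2 ^ (k - 1))) A" "entries_in (Zhalf_zeta (2 ^ (k - 1))) B"
    "U = A + zeta (2 ^ k) \<cdot>\<^sub>m B" "phi k U = phi_blocks k A B"
proof -
  have "entries_in (Zhalf_zeta (2 ^ k)) U"
    using U by (simp add: unitaries_over_def entries_in_def)
  then obtain A B where decomp: "is_decomp k U (A, B)"
    using is_decomp_exists[of k U] k by auto
  then show thesis
    using that phi_eq_phi_blocks[OF k decomp] carrier_matD[OF Ud] unfolding is_decomp_def by auto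
qed

lemma phi_unitaries_over:
  assumes k: "k \<ge> 2" and U: "U \<in> unitaries_over (Zhalf_zeta (2 ^ k))"
  shows "phi k U \<in> unitaries_over (Zhalf_zeta (2 ^ (k - 1)))"
proof -
  define d where "d = dim_row U"
  have Ud: "U \<in> carrier_mat d d" and UU: "U * adjoint U = 1\<^sub>m d"
    using U by (auto simp: unitaries_over_def unitary_mat_def d_def)
  obtain A B where A: "A \<in> carrier_mat d d" and B: "B \<in> carrier_mat d d"
    and eA: "entries_in (Zhalf_zeta (2 ^ (k - 1))) A" and eB: "entries_in (Zhalf_zeta (2 ^ (k - 1))) B"
    and U_eq: "U = A + zeta (2 ^ k) \<cdot>\<^sub>m B" and phi: "phi k U = phi_blocks k A B"
    using unitaries_over_decomp[OF k U Ud] .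
  have "unitary_mat (phi k U)"
    using UU[unfolded U_eq] unfolding phi
    by (intro unitary_matI[OF phi_blocks_carrier[OF A B]] phi_blocks_mult_adjoint[OF A B]
      unitary_decomp_relations[OF k A B eA eB])
  moreover have "entries_in (Zhalf_zeta (2 ^ (k - 1))) (phi k U)"
    unfolding phi by (rule phi_blocks_entries_in[OF A B eA eB])
  ultimately show ?thesis
    by (simp add: unitaries_over_def entries_in_def)
qed

lemma phi_catalytic:
  assumes k: "k \<ge> 2" and U: "U \<in> unitaries_over (Zhalf_zeta (2 ^ k))" and Ud: "U \<in> carrier_mat d d"
  shows "phi k U \<in> carrier_mat (d * 2) (d * 2)"
    and "u \<in> carrier_vec d \<Longrightarrow> phi k U *\<^sub>v kron_vec u (lambda_state k) = kron_vec (U *\<^sub>v u) (lambda_state k)"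
proof -
  obtain A B where A: "A \<in> carrier_mat d d" and B: "B \<in> carrier_mat d d"
    and U_eq: "U = A + zeta (2 ^ k) \<cdot>\<^sub>m B" and phi: "phi k U = phi_blocks k A B"
    using unitaries_over_decomp[OF k U Ud] .
  show "phi k U \<in> carrier_mat (d * 2) (d * 2)"
    unfolding phi by (rule phi_blocks_carrier[OF A B])
  show "phi k U *\<^sub>v kron_vec u (lambda_state k) = kron_vec (U *\<^sub>v u) (lambda_state k)"
    if "u \<in> carrier_vec d"
    using phi_blocks_catalytic[OF A B that, of k] unfolding phi U_eq[symmetric] .
qed

theorem proposition1:
  fixes k :: nat
  assumes "k \<ge> 2"
  shows "(\<forall>U \<in> unitaries_over (Zhalf_zeta (2 ^ k)). \<exists>!AB. is_decomp k U AB)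
    \<and> catalytic_embedding (unitaries_over (Zhalf_zeta (2 ^ k)))
         (unitaries_over (Zhalf_zeta (2 ^ (k - 1)))) 2 (phi k) (lambda_state k)"
proof (intro conjI ballI)
  fix U assume "U \<in> unitaries_over (Zhalf_zeta (2 ^ k))"
  then have "entries_in (Zhalf_zeta (2 ^ k)) U"
    by (simp add: unitaries_over_def entries_in_def)
  then obtain AB where "is_decomp k U AB"
    using is_decomp_exists assms by fastforce
  then show "\<exists>!AB. is_decomp k U AB"
    using is_decomp_unique[OF assms] by (metis prod.collapse)
next
  show "catalytic_embedding (unitaries_over (Zhalf_zeta (2 ^ k)))
      (unitaries_over (Zhalf_zeta (2 ^ (k - 1)))) 2 (phi k) (lambda_state k)"
    unfolding catalytic_embedding_def
    using phi_unitaries_over[OF assms] phi_catalytic[OF assms] lambda_state_carrier lambda_state_normalized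
    by blast
qed

end
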